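(* Let $r\ge 1$ and let $H$ be a graph with at least one edge. The join of $rK_1$ and $H$ is well-bicovered if and only if $H$ is both well-covered and well-bicovered, and $b(H)=r+\alpha(H)$.
   Context: All graphs are finite and simple; "subgraph" means induced subgraph. $rK_1$ is the edgeless graph on $r$ vertices. $b(G)$ denotes the maximum order of an induced bipartite subgraph of $G$. A graph is well-bicovered if every vertex-inclusion-maximal induced bipartite subgraph has the same order. A graph is well-covered if every maximal independent set has the same cardinality, namely the independence number $\alpha$. The join of two graphs is their disjoint union together with all edges between them. *)

theory Defs
  imports Main
begin

type_synonym 'a graph = "'a set \<times> ('a \<Rightarrow> 'a \<Rightarrow> bool)"

definition verts :: "'a graph \<Rightarrow> 'a set" where "verts G = fst G"
definition adj :: "'a graph \<Rightarrow> 'a \<Rightarrow> 'a \<Rightarrow> bool" where "adj G = snd G"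

definition simple_graph :: "'a graph \<Rightarrow> bool" where
  "simple_graph G \<longleftrightarrow> finite (verts G) \<and>
     (\<forall>u v. adj G u v \<longrightarrow> u \<in> verts G \<and> v \<in> verts G \<and> u \<noteq> v \<and> adj G v u)"

definition has_edge :: "'a graph \<Rightarrow> bool" where
  "has_edge G \<longleftrightarrow> (\<exists>u v. adj G u v)"

definition edgeless :: "nat \<Rightarrow> nat graph" where
  "edgeless r = ({..<r}, \<lambda>_ _. False)"

definition graph_join :: "'a graph \<Rightarrow> 'b graph \<Rightarrow> ('a + 'b) graph" where
  "graph_join G H =
     (Inl ` verts G \<union> Inr ` verts H,
      \<lambda>x y. case (x, y) of
          (Inl u, Inl v) \<Rightarrow> adj G u v
        | (Inr u, Inr v) \<Rightarrow> adj H u v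
        | (Inl u, Inr v) \<Rightarrow> u \<in> verts G \<and> v \<in> verts H
        | (Inr u, Inl v) \<Rightarrow> u \<in> verts H \<and> v \<in> verts G)"

definition independent :: "'a graph \<Rightarrow> 'a set \<Rightarrow> bool" where
  "independent G S \<longleftrightarrow> S \<subseteq> verts G \<and> (\<forall>u\<in>S. \<forall>v\<in>S. \<not> adj G u v)"

definition maximal_independent :: "'a graph \<Rightarrow> 'a set \<Rightarrow> bool" where
  "maximal_independent G S \<longleftrightarrow> independent G S \<and>
     (\<forall>T. independent G T \<and> S \<subseteq> T \<longrightarrow> T = S)"

definition alpha :: "'a graph \<Rightarrow> nat" where
  "alpha G = Max (card ` {S. independent G S})"

definition well_covered :: "'a graph \<Rightarrow> bool" where
  "well_covered G \<longleftrightarrow> (\<forall>S. maximal_independent G S \<longrightarrow> card S = alpha G)"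

definition bipartite_set :: "'a graph \<Rightarrow> 'a set \<Rightarrow> bool" where
  "bipartite_set G S \<longleftrightarrow> S \<subseteq> verts G \<and>
     (\<exists>A B. A \<union> B = S \<and> independent G A \<and> independent G B)"

definition maximal_bipartite_set :: "'a graph \<Rightarrow> 'a set \<Rightarrow> bool" where
  "maximal_bipartite_set G S \<longleftrightarrow> bipartite_set G S \<and>
     (\<forall>T. bipartite_set G T \<and> S \<subseteq> T \<longrightarrow> T = S)"

definition bip_num :: "'a graph \<Rightarrow> nat" where
  "bip_num G = Max (card ` {S. bipartite_set G S})"

definition well_bicovered :: "'a graph \<Rightarrow> bool" where
  "well_bicovered G \<longleftrightarrow>
     (\<forall>S T. maximal_bipartite_set G S \<and> maximal_bipartite_set G T \<longrightarrow> card S = card T)"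

end

theory Submission
  imports Defs
begin

text \<open>Write a vertex set of the join of \<open>rK\<^sub>1\<close> and \<open>H\<close> as \<open>X <+> Y\<close>. Every vertex of
  \<open>rK\<^sub>1\<close> is adjacent to every vertex of \<open>H\<close>, so an independent set lies on one side, and
  \<open>X <+> Y\<close> induces a bipartite subgraph iff \<open>X = {}\<close> and \<open>Y\<close> is bipartite in \<open>H\<close>, or \<open>Y\<close> is
  independent in \<open>H\<close>. Consequently the maximal bipartite sets of the join are the sets
  \<open>{..<r} <+> I\<close> with \<open>I\<close> maximal independent in \<open>H\<close>, of size \<open>r + |I|\<close>, and the sets
  \<open>{} <+> T\<close> with \<open>T\<close> maximal bipartite in \<open>H\<close>; the latter cannot absorb a vertex of \<open>rK\<^sub>1\<close>
  because, \<open>H\<close> having an edge, \<open>T\<close> is not independent. The join is well-bicovered iff all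
  these sizes agree; as some maximal bipartite set of \<open>H\<close> has size \<open>b(H)\<close> and some maximal
  independent set has size \<open>\<alpha>(H)\<close>, this means that \<open>H\<close> is well-covered and well-bicovered
  with \<open>b(H) = r + \<alpha>(H)\<close>.\<close>

lemma Plus_vimage_Inl_Inr: "Inl -` S <+> Inr -` S = S"
proof (rule set_eqI)
  fix u
  show "u \<in> Inl -` S <+> Inr -` S \<longleftrightarrow> u \<in> S"
    by (cases u) auto
qed

lemma Plus_subset_Plus_iff: "A <+> B \<subseteq> C <+> D \<longleftrightarrow> A \<subseteq> C \<and> B \<subseteq> D"
  by blast

lemma Plus_eq_Plus_iff: "A <+> B = C <+> D \<longleftrightarrow> A = C \<and> B = D"
  by blast

lemma Ball_Plus_iff: "(\<forall>u\<in>A <+> B. P u) \<longleftrightarrow> (\<forall>a\<in>A. P (Inl a)) \<and> (\<forall>b\<in>B. P (Inr b))"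
  by blast

lemma Plus_Un_Plus: "(A <+> B) \<union> (C <+> D) = (A \<union> C) <+> (B \<union> D)"
  by blast

lemma verts_graph_join [simp]: "verts (graph_join G H) = verts G <+> verts H"
  by (simp add: graph_join_def verts_def Plus_def)

lemma adj_graph_join [simp]:
  "adj (graph_join G H) (Inl u) (Inl v) \<longleftrightarrow> adj G u v"
  "adj (graph_join G H) (Inr a) (Inr b) \<longleftrightarrow> adj H a b"
  "adj (graph_join G H) (Inl u) (Inr b) \<longleftrightarrow> u \<in> verts G \<and> b \<in> verts H"
  "adj (graph_join G H) (Inr a) (Inl v) \<longleftrightarrow> a \<in> verts H \<and> v \<in> verts G"
  by (simp_all add: graph_join_def adj_def verts_def)

lemma verts_edgeless [simp]: "verts (edgeless r) = {..<r}"
  and adj_edgeless [simp]: "\<not> adj (edgeless r) u v"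
  by (simp_all add: edgeless_def verts_def adj_def)

lemma independent_edgeless_iff [simp]: "independent (edgeless r) X \<longleftrightarrow> X \<subseteq> {..<r}"
  by (simp add: independent_def)

lemma independent_empty [simp]: "independent G {}"
  by (simp add: independent_def)

lemma finite_verts: "simple_graph H \<Longrightarrow> finite (verts H)"
  by (simp add: simple_graph_def)

lemma independent_subset: "independent G T \<Longrightarrow> S \<subseteq> T \<Longrightarrow> independent G S"
  by (auto simp: independent_def)

lemma bipartite_set_iff:
  "bipartite_set G S \<longleftrightarrow> (\<exists>A B. A \<union> B = S \<and> independent G A \<and> independent G B)"
  by (auto simp: bipartite_set_def independent_def)

lemma bipartite_set_edgeless_iff [simp]: "bipartite_set (edgeless r) X \<longleftrightarrow> X \<subseteq> {..<r}"
  by (auto simp: bipartite_set_def)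

lemma independent_join_iff:
  "independent (graph_join G H) (X <+> Y) \<longleftrightarrow>
     independent G X \<and> independent H Y \<and> (X = {} \<or> Y = {})"
  by (auto simp: independent_def Ball_Plus_iff Plus_subset_Plus_iff)

lemma bipartite_set_join_iff:
  "bipartite_set (graph_join G H) (X <+> Y) \<longleftrightarrow>
     (X = {} \<and> bipartite_set H Y) \<or> (Y = {} \<and> bipartite_set G X) \<or>
     (independent G X \<and> independent H Y)" (is "?lhs \<longleftrightarrow> ?rhs")
proof
  assume ?lhs
  then obtain A B where AB: "A \<union> B = X <+> Y"
    and "independent (graph_join G H) (Inl -` A <+> Inr -` A)"
    and "independent (graph_join G H) (Inl -` B <+> Inr -` B)"
    unfolding bipartite_set_iff Plus_vimage_Inl_Inr by blast
  then have A: "independent G (Inl -` A)" "independent H (Inr -` A)"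
      "Inl -` A = {} \<or> Inr -` A = {}"
    and B: "independent G (Inl -` B)" "independent H (Inr -` B)"
      "Inl -` B = {} \<or> Inr -` B = {}"
    unfolding independent_join_iff by blast+
  have "X = Inl -` A \<union> Inl -` B" and "Y = Inr -` A \<union> Inr -` B"
    using arg_cong[OF AB, of "vimage Inl"] arg_cong[OF AB, of "vimage Inr"] by auto
  \<comment> \<open>If \<open>X\<close> and \<open>Y\<close> are both nonempty, the part meeting \<open>X\<close> misses \<open>Y\<close>, so the other
    part contains all of \<open>Y\<close> and none of \<open>X\<close>.\<close>
  then show ?rhs
    using A B unfolding bipartite_set_iff by (metis sup_bot.left_neutral sup_bot.right_neutral)
next
  assume ?rhs
  then show ?lhs
  proof (elim disjE conjE)
    assume "X = {}" "bipartite_set H Y"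
    then obtain A B where "A \<union> B = Y" "independent H A" "independent H B"
      unfolding bipartite_set_iff by blast
    then show ?lhs unfolding bipartite_set_iff
      by (intro exI[of _ "{} <+> A"] exI[of _ "{} <+> B"])
        (simp add: Plus_Un_Plus independent_join_iff \<open>X = {}\<close>)
  next
    assume "Y = {}" "bipartite_set G X"
    then obtain A B where "A \<union> B = X" "independent G A" "independent G B"
      unfolding bipartite_set_iff by blast
    then show ?lhs unfolding bipartite_set_iff
      by (intro exI[of _ "A <+> {}"] exI[of _ "B <+> {}"])
        (simp add: Plus_Un_Plus independent_join_iff \<open>Y = {}\<close>)
  next
    assume "independent G X" "independent H Y"
    then show ?lhs unfolding bipartite_set_iff
      by (intro exI[of _ "X <+> {}"] exI[of _ "{} <+> Y"])
        (simp add: Plus_Un_Plus independent_join_iff)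
  qed
qed

corollary bipartite_set_join_edgeless_iff:
  "bipartite_set (graph_join (edgeless r) H) (X <+> Y) \<longleftrightarrow>
     X \<subseteq> {..<r} \<and> (X = {} \<and> bipartite_set H Y \<or> independent H Y)"
  by (auto simp: bipartite_set_join_iff)

lemma maximal_bipartite_set_not_independent:
  assumes "simple_graph H" "has_edge H" "maximal_bipartite_set H T"
  shows "\<not> independent H T"
proof
  assume T: "independent H T"
  have "verts H \<subseteq> T"
  proof
    fix v assume "v \<in> verts H"
    with \<open>simple_graph H\<close> have "independent H {v}"
      unfolding simple_graph_def independent_def by blast
    with T have "bipartite_set H (T \<union> {v})"
      unfolding bipartite_set_iff by blast
    with \<open>maximal_bipartite_set H T\<close> show "v \<in> T"
      unfolding maximal_bipartite_set_def by blast
  qed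
  moreover obtain u v where "adj H u v"
    using \<open>has_edge H\<close> unfolding has_edge_def by blast
  ultimately show False
    using T \<open>simple_graph H\<close> unfolding independent_def simple_graph_def by blast
qed

lemma maximal_bipartite_set_join_edgeless_maximal_independent:
  assumes "r \<ge> 1" "maximal_independent H I"
  shows "maximal_bipartite_set (graph_join (edgeless r) H) ({..<r} <+> I)"
  unfolding maximal_bipartite_set_def
proof (intro conjI allI impI)
  show "bipartite_set (graph_join (edgeless r) H) ({..<r} <+> I)"
    using assms(2) by (simp add: bipartite_set_join_edgeless_iff maximal_independent_def)
  fix T assume T: "bipartite_set (graph_join (edgeless r) H) T \<and> {..<r} <+> I \<subseteq> T"
  obtain X Y where "T = X <+> Y"
    by (metis Plus_vimage_Inl_Inr)
  moreover have "{..<r} \<noteq> {}"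
    using \<open>r \<ge> 1\<close> by (simp add: lessThan_empty_iff)
  ultimately have "X = {..<r}" "I \<subseteq> Y" "independent H Y"
    using T by (auto simp: bipartite_set_join_edgeless_iff Plus_subset_Plus_iff)
  with assms(2) \<open>T = X <+> Y\<close> show "T = {..<r} <+> I"
    unfolding maximal_independent_def by blast
qed

lemma maximal_bipartite_set_join_edgeless_maximal_bipartite_set:
  assumes "simple_graph H" "has_edge H" "maximal_bipartite_set H T"
  shows "maximal_bipartite_set (graph_join (edgeless r) H) ({} <+> T)"
  unfolding maximal_bipartite_set_def
proof (intro conjI allI impI)
  show "bipartite_set (graph_join (edgeless r) H) ({} <+> T)"
    using assms(3) by (simp add: bipartite_set_join_edgeless_iff maximal_bipartite_set_def)
  fix S assume S: "bipartite_set (graph_join (edgeless r) H) S \<and> {} <+> T \<subseteq> S"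
  obtain X Y where "S = X <+> Y"
    by (metis Plus_vimage_Inl_Inr)
  have "T \<subseteq> Y"
    using S \<open>S = X <+> Y\<close> by (simp add: Plus_subset_Plus_iff)
  then have "\<not> independent H Y"
    using maximal_bipartite_set_not_independent[OF assms] independent_subset by metis
  with S \<open>S = X <+> Y\<close> have "X = {}" "T \<subseteq> Y" "bipartite_set H Y"
    by (auto simp: bipartite_set_join_edgeless_iff Plus_subset_Plus_iff)
  with assms(3) \<open>S = X <+> Y\<close> show "S = {} <+> T"
    unfolding maximal_bipartite_set_def by blast
qed

lemma maximal_bipartite_set_join_edgeless_cases:
  assumes "maximal_bipartite_set (graph_join (edgeless r) H) S"
  obtains I where "maximal_independent H I" "S = {..<r} <+> I"
    | T where "maximal_bipartite_set H T" "S = {} <+> T"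
proof -
  let ?G = "graph_join (edgeless r) H"
  obtain X Y where S: "S = X <+> Y"
    by (metis Plus_vimage_Inl_Inr)
  have max: "X' <+> Y' = X <+> Y"
    if "bipartite_set ?G (X' <+> Y')" "X \<subseteq> X'" "Y \<subseteq> Y'" for X' Y'
    using assms that unfolding S maximal_bipartite_set_def
    by (blast dest: Plus_subset_Plus_iff[THEN iffD2])
  have bip: "X \<subseteq> {..<r}" "X = {} \<and> bipartite_set H Y \<or> independent H Y"
    using assms unfolding S maximal_bipartite_set_def bipartite_set_join_edgeless_iff by blast+
  show thesis
  proof (cases "independent H Y")
    case True
    have "X = {..<r}"
      using max[of "{..<r}" Y] bip True
      by (simp add: bipartite_set_join_edgeless_iff Plus_eq_Plus_iff)
    moreover have "maximal_independent H Y"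
      unfolding maximal_independent_def
      using True max[of "{..<r}"] \<open>X = {..<r}\<close>
      by (auto simp: bipartite_set_join_edgeless_iff Plus_eq_Plus_iff)
    ultimately show thesis using that(1) S by blast
  next
    case False
    then have "X = {}" "bipartite_set H Y" using bip by auto
    moreover have "maximal_bipartite_set H Y"
      unfolding maximal_bipartite_set_def
      using \<open>bipartite_set H Y\<close> max[of "{}"] \<open>X = {}\<close>
      by (auto simp: bipartite_set_join_edgeless_iff Plus_eq_Plus_iff)
    ultimately show thesis using that(2) S by blast
  qed
qed

lemma ex_maximal_with_Max_card:
  assumes "finite V" "\<And>S. P S \<Longrightarrow> S \<subseteq> V" "P S\<^sub>0"
  obtains S where "P S" "\<forall>T. P T \<and> S \<subseteq> T \<longrightarrow> T = S" "card S = Max (card ` {S. P S})"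
proof -
  have fin: "finite {S. P S}"
    using assms(1,2) by (metis Collect_mono PowI Pow_def finite_Pow_iff finite_subset)
  then have "Max (card ` {S. P S}) \<in> card ` {S. P S}"
    using assms(3) by (intro Max_in) auto
  then obtain S where S: "P S" "card S = Max (card ` {S. P S})"
    by auto
  have "T = S" if "P T" "S \<subseteq> T" for T
  proof (rule card_subset_eq[symmetric])
    show "finite T"
      using assms(1) assms(2)[OF that(1)] by (rule finite_subset[rotated])
    have "card T \<le> card S"
      unfolding S(2) using fin that(1) by (intro Max_ge) auto
    with card_mono[OF \<open>finite T\<close> that(2)] show "card S = card T"
      by simp
  qed (fact that(2))
  with S that show thesis by blast
qed

lemma ex_maximal_independent_card_alpha:
  assumes "finite (verts H)"
  obtains I where "maximal_independent H I" "card I = alpha H"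
proof (rule ex_maximal_with_Max_card[OF assms, of "independent H" "{}"])
  show "independent H S \<Longrightarrow> S \<subseteq> verts H" for S
    by (simp add: independent_def)
qed (use that in \<open>auto simp: maximal_independent_def alpha_def\<close>)

lemma ex_maximal_bipartite_set_card_bip_num:
  assumes "finite (verts H)"
  obtains T where "maximal_bipartite_set H T" "card T = bip_num H"
proof (rule ex_maximal_with_Max_card[OF assms, of "bipartite_set H" "{}"])
  show "bipartite_set H S \<Longrightarrow> S \<subseteq> verts H" for S
    by (simp add: bipartite_set_def)
  show "bipartite_set H {}"
    by (simp add: bipartite_set_iff)
qed (use that in \<open>auto simp: maximal_bipartite_set_def bip_num_def\<close>)

lemma well_bicovered_iff_card_eq:
  assumes "maximal_bipartite_set G S\<^sub>0"
  shows "well_bicovered G \<longleftrightarrow> (\<forall>S. maximal_bipartite_set G S \<longrightarrow> card S = card S\<^sub>0)"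
  unfolding well_bicovered_def
proof (intro iffI allI impI)
  fix S assume "\<forall>S T. maximal_bipartite_set G S \<and> maximal_bipartite_set G T \<longrightarrow> card S = card T"
    and "maximal_bipartite_set G S"
  with assms show "card S = card S\<^sub>0"
    by blast
next
  fix S T assume "\<forall>S. maximal_bipartite_set G S \<longrightarrow> card S = card S\<^sub>0"
    and "maximal_bipartite_set G S \<and> maximal_bipartite_set G T"
  then show "card S = card T"
    by simp
qed

lemma well_bicovered_join_edgeless_iff:
  assumes "r \<ge> 1" "simple_graph H" "has_edge H"
  shows "well_bicovered (graph_join (edgeless r) H) \<longleftrightarrow>
    (\<forall>I. maximal_independent H I \<longrightarrow> r + card I = bip_num H) \<and>
    (\<forall>T. maximal_bipartite_set H T \<longrightarrow> card T = bip_num H)"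
proof -
  let ?G = "graph_join (edgeless r) H"
  have fin: "finite (verts H)"
    using assms(2) by (rule finite_verts)
  have card_full: "card ({..<r} <+> I) = r + card I" if "maximal_independent H I" for I
  proof -
    have "finite I"
      using that finite_subset[OF _ fin] unfolding maximal_independent_def independent_def by blast
    then show ?thesis
      by (simp add: card_Plus)
  qed
  have card_empty: "card ({} <+> T) = card T" for T :: "'a set"
    by (simp add: Plus_def card_image)
  obtain T\<^sub>0 where T\<^sub>0: "maximal_bipartite_set H T\<^sub>0" "card T\<^sub>0 = bip_num H"
    using ex_maximal_bipartite_set_card_bip_num[OF fin] .
  have "well_bicovered ?G \<longleftrightarrow> (\<forall>S. maximal_bipartite_set ?G S \<longrightarrow> card S = bip_num H)"
    using well_bicovered_iff_card_eq[OF
        maximal_bipartite_set_join_edgeless_maximal_bipartite_set[OF assms(2,3) T\<^sub>0(1)]]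
    by (simp add: card_empty T\<^sub>0(2))
  also have "\<dots> \<longleftrightarrow> (\<forall>I. maximal_independent H I \<longrightarrow> r + card I = bip_num H) \<and>
    (\<forall>T. maximal_bipartite_set H T \<longrightarrow> card T = bip_num H)"
  proof (intro iffI conjI allI impI)
    fix S assume "maximal_bipartite_set ?G S"
    moreover assume "(\<forall>I. maximal_independent H I \<longrightarrow> r + card I = bip_num H) \<and>
      (\<forall>T. maximal_bipartite_set H T \<longrightarrow> card T = bip_num H)"
    ultimately show "card S = bip_num H"
      by (cases rule: maximal_bipartite_set_join_edgeless_cases) (auto simp: card_full card_empty)
  next
    assume all: "\<forall>S. maximal_bipartite_set ?G S \<longrightarrow> card S = bip_num H"
    fix I assume "maximal_independent H I"
    with all show "r + card I = bip_num H"
      using maximal_bipartite_set_join_edgeless_maximal_independent[OF assms(1)] card_full by metis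
  next
    assume all: "\<forall>S. maximal_bipartite_set ?G S \<longrightarrow> card S = bip_num H"
    fix T assume "maximal_bipartite_set H T"
    with all show "card T = bip_num H"
      using maximal_bipartite_set_join_edgeless_maximal_bipartite_set[OF assms(2,3)] card_empty by metis
  qed
  finally show ?thesis .
qed

theorem mainTheorem3:
  fixes H :: "'a graph" and r :: nat
  assumes "r \<ge> 1" and "simple_graph H" and "has_edge H"
  shows "well_bicovered (graph_join (edgeless r) H) \<longleftrightarrow>
           (well_covered H \<and> well_bicovered H \<and> bip_num H = r + alpha H)"
proof -
  have fin: "finite (verts H)"
    using assms(2) by (rule finite_verts)
  obtain I\<^sub>0 where I\<^sub>0: "maximal_independent H I\<^sub>0" "card I\<^sub>0 = alpha H"
    using ex_maximal_independent_card_alpha[OF fin] .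
  obtain T\<^sub>0 where T\<^sub>0: "maximal_bipartite_set H T\<^sub>0" "card T\<^sub>0 = bip_num H"
    using ex_maximal_bipartite_set_card_bip_num[OF fin] .
  have "(\<forall>I. maximal_independent H I \<longrightarrow> r + card I = bip_num H) \<longleftrightarrow>
      well_covered H \<and> bip_num H = r + alpha H"
  proof
    assume all: "\<forall>I. maximal_independent H I \<longrightarrow> r + card I = bip_num H"
    with I\<^sub>0 have "bip_num H = r + alpha H"
      by auto
    with all show "well_covered H \<and> bip_num H = r + alpha H"
      unfolding well_covered_def by auto
  qed (auto simp: well_covered_def)
  moreover have "(\<forall>T. maximal_bipartite_set H T \<longrightarrow> card T = bip_num H) \<longleftrightarrow> well_bicovered H"
    using well_bicovered_iff_card_eq[OF T\<^sub>0(1)] by (simp add: T\<^sub>0(2))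
  ultimately show ?thesis
    using well_bicovered_join_edgeless_iff[OF assms] by blast
qed

end
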